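(* Let $X=(G,H,\mu,\gamma)$ be a crossed module of finite groups and $\mathbb{K}$ a field. Then $D(G,H)$ is a braided (quasitriangular) bialgebra with $R$-matrix $$R=\sum_{h\in H}(\delta_h\otimes 1)\otimes(1\otimes\gamma(h))\in D(G,H)\otimes D(G,H),$$ where in the first factor $1$ is the neutral element of $G$ and in the second factor $1=\sum_{x\in H}\delta_x$ is the unit of $\mathbb{K}[H]$.
   Context: A crossed module of finite groups is a quadruple $X=(G,H,\mu,\gamma)$ where $G,H$ are finite groups, $\mu$ is a left action of $G$ on $H$ by group automorphisms, written $g\cdot h$, and $\gamma:H\to G$ is a group homomorphism with $\gamma(g\cdot h)=g\gamma(h)g^{-1}$ and $\gamma(h)\cdot n=hnh^{-1}$ for all $g\in G$, $h,n\in H$. $D(G,H)$ is the Hopf algebra $\mathbb{K}[H]\otimes\mathbb{K}G$, where $\mathbb{K}[H]$ is the dual of $\mathbb{K}H$ with basis $\{\delta_x\}_{x\in H}$ dual to the group elements, with product $(\delta_x\otimes a)(\delta_y\otimes b)=\delta_{x,a\cdot y}\delta_x\otimes ab$, unit $(\sum_{x\in H}\delta_x)\otimes 1$, coproduct $\Delta(\delta_x\otimes a)=\sum_{h\in H}(\delta_h\otimes a)\otimes(\delta_{h^{-1}x}\otimes a)$, counit $\varepsilon(\delta_x\otimes a)=\delta_{x,1}$ and antipode $S(\delta_x\otimes a)=\delta_{a^{-1}\cdot x^{-1}}\otimes a^{-1}$. A braided bialgebra is a bialgebra $A$ with an invertible $R\in A\otimes A$ such that $\Delta^{op}(x)=R\Delta(x)R^{-1}$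 for all $x$, $(\Delta\otimes\mathrm{id})(R)=R_{13}R_{23}$ and $(\mathrm{id}\otimes\Delta)(R)=R_{13}R_{12}$. *)

theory Defs
  imports "HOL-Algebra.Group"
begin

definition crossed_module ::
  "'g monoid \<Rightarrow> 'h monoid \<Rightarrow> ('g \<Rightarrow> 'h \<Rightarrow> 'h) \<Rightarrow> ('h \<Rightarrow> 'g) \<Rightarrow> bool" where
  "crossed_module G H act \<gamma> \<longleftrightarrow>
     group G \<and> group H \<and>
     (\<forall>g\<in>carrier G. act g \<in> iso H H) \<and>
     (\<forall>h\<in>carrier H. act \<one>\<^bsub>G\<^esub> h = h) \<and>
     (\<forall>g1\<in>carrier G. \<forall>g2\<in>carrier G. \<forall>h\<in>carrier H.
        act (g1 \<otimes>\<^bsub>G\<^esub> g2) h = act g1 (act g2 h)) \<and>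
     \<gamma> \<in> hom H G \<and>
     (\<forall>g\<in>carrier G. \<forall>h\<in>carrier H.
        \<gamma> (act g h) = g \<otimes>\<^bsub>G\<^esub> \<gamma> h \<otimes>\<^bsub>G\<^esub> inv\<^bsub>G\<^esub> g) \<and>
     (\<forall>h\<in>carrier H. \<forall>n\<in>carrier H.
        act (\<gamma> h) n = h \<otimes>\<^bsub>H\<^esub> n \<otimes>\<^bsub>H\<^esub> inv\<^bsub>H\<^esub> h)"

text \<open>A vector of the K-vector space with basis B is a function 'b => 'k vanishing
outside B (coefficients w.r.t. the basis). Tensor products of such spaces have
the basis B x B (resp. B x B x B).\<close>

definition vspace :: "'b set \<Rightarrow> ('b \<Rightarrow> 'k::zero) set" where
  "vspace B = {v. \<forall>x. x \<notin> B \<longrightarrow> v x = 0}"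

definition bvec :: "'b \<Rightarrow> 'b \<Rightarrow> 'k::zero_neq_one" where
  "bvec b = (\<lambda>x. if x = b then 1 else 0)"

definition lin_ext :: "'b set \<Rightarrow> ('b \<Rightarrow> 'c \<Rightarrow> 'k::comm_semiring_1) \<Rightarrow> ('b \<Rightarrow> 'k) \<Rightarrow> 'c \<Rightarrow> 'k" where
  "lin_ext B f v = (\<lambda>c. \<Sum>b\<in>B. v b * f b c)"

definition lin_form :: "'b set \<Rightarrow> ('b \<Rightarrow> 'k::comm_semiring_1) \<Rightarrow> ('b \<Rightarrow> 'k) \<Rightarrow> 'k" where
  "lin_form B f v = (\<Sum>b\<in>B. v b * f b)"

definition bmul :: "'b set \<Rightarrow> ('b \<Rightarrow> 'b \<Rightarrow> 'b \<Rightarrow> 'k::comm_semiring_1) \<Rightarrow> ('b \<Rightarrow> 'k) \<Rightarrow> ('b \<Rightarrow> 'k) \<Rightarrow> 'b \<Rightarrow> 'k" where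
  "bmul B m v w = (\<lambda>c. \<Sum>a\<in>B. \<Sum>b\<in>B. v a * w b * m a b c)"

definition tens :: "('b \<Rightarrow> 'k::times) \<Rightarrow> ('c \<Rightarrow> 'k) \<Rightarrow> 'b \<times> 'c \<Rightarrow> 'k" where
  "tens v w = (\<lambda>(x, y). v x * w y)"

definition tens_mult :: "('b \<Rightarrow> 'b \<Rightarrow> 'b \<Rightarrow> 'k::times) \<Rightarrow> ('c \<Rightarrow> 'c \<Rightarrow> 'c \<Rightarrow> 'k) \<Rightarrow>
    'b \<times> 'c \<Rightarrow> 'b \<times> 'c \<Rightarrow> 'b \<times> 'c \<Rightarrow> 'k" where
  "tens_mult m n p q = tens (m (fst p) (fst q)) (n (snd p) (snd q))"

abbreviation bmul2 where "bmul2 B m \<equiv> bmul (B \<times> B) (tens_mult m m)"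
abbreviation bmul3 where "bmul3 B m \<equiv> bmul (B \<times> B \<times> B) (tens_mult m (tens_mult m m))"

text \<open>(Delta tensor id) and (id tensor Delta) on basis elements of A tensor A.\<close>
definition comul_left :: "('b \<Rightarrow> 'b \<times> 'b \<Rightarrow> 'k::comm_semiring_1) \<Rightarrow> 'b \<times> 'b \<Rightarrow> 'b \<times> 'b \<times> 'b \<Rightarrow> 'k" where
  "comul_left \<Delta> p = (\<lambda>(x, y, z). \<Delta> (fst p) (x, y) * bvec (snd p) z)"

definition comul_right :: "('b \<Rightarrow> 'b \<times> 'b \<Rightarrow> 'k::comm_semiring_1) \<Rightarrow> 'b \<times> 'b \<Rightarrow> 'b \<times> 'b \<times> 'b \<Rightarrow> 'k" where
  "comul_right \<Delta> p = tens (bvec (fst p)) (\<Delta> (snd p))"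

definition swap_tens :: "('b \<times> 'b \<Rightarrow> 'k) \<Rightarrow> 'b \<times> 'b \<Rightarrow> 'k" where
  "swap_tens v = (\<lambda>(x, y). v (y, x))"

definition bialgebra ::
  "'b set \<Rightarrow> ('b \<Rightarrow> 'b \<Rightarrow> 'b \<Rightarrow> 'k::field) \<Rightarrow> ('b \<Rightarrow> 'k) \<Rightarrow> ('b \<Rightarrow> 'b \<times> 'b \<Rightarrow> 'k) \<Rightarrow> ('b \<Rightarrow> 'k) \<Rightarrow> bool" where
  "bialgebra B m u \<Delta> \<epsilon> \<longleftrightarrow>
     finite B \<and>
     (\<forall>a\<in>B. \<forall>b\<in>B. m a b \<in> vspace B) \<and> u \<in> vspace B \<and>
     (\<forall>a\<in>B. \<Delta> a \<in> vspace (B \<times> B)) \<and>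
     (\<forall>x\<in>vspace B. \<forall>y\<in>vspace B. \<forall>z\<in>vspace B. bmul B m (bmul B m x y) z = bmul B m x (bmul B m y z)) \<and>
     (\<forall>x\<in>vspace B. bmul B m u x = x \<and> bmul B m x u = x) \<and>
     (\<forall>x\<in>vspace B. lin_ext (B \<times> B) (comul_left \<Delta>) (lin_ext B \<Delta> x)
                  = lin_ext (B \<times> B) (comul_right \<Delta>) (lin_ext B \<Delta> x)) \<and>
     (\<forall>x\<in>vspace B. (\<lambda>y. \<Sum>a\<in>B. \<epsilon> a * lin_ext B \<Delta> x (a, y)) = x) \<and>
     (\<forall>x\<in>vspace B. (\<lambda>y. \<Sum>a\<in>B. lin_ext B \<Delta> x (y, a) * \<epsilon> a) = x) \<and>
     (\<forall>x\<in>vspace B. \<forall>y\<in>vspace B.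
        lin_ext B \<Delta> (bmul B m x y) = bmul2 B m (lin_ext B \<Delta> x) (lin_ext B \<Delta> y)) \<and>
     lin_ext B \<Delta> u = tens u u \<and>
     (\<forall>x\<in>vspace B. \<forall>y\<in>vspace B. lin_form B \<epsilon> (bmul B m x y) = lin_form B \<epsilon> x * lin_form B \<epsilon> y) \<and>
     lin_form B \<epsilon> u = 1"

definition braided_bialgebra ::
  "'b set \<Rightarrow> ('b \<Rightarrow> 'b \<Rightarrow> 'b \<Rightarrow> 'k::field) \<Rightarrow> ('b \<Rightarrow> 'k) \<Rightarrow> ('b \<Rightarrow> 'b \<times> 'b \<Rightarrow> 'k) \<Rightarrow> ('b \<Rightarrow> 'k)
     \<Rightarrow> ('b \<times> 'b \<Rightarrow> 'k) \<Rightarrow> bool" where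
  "braided_bialgebra B m u \<Delta> \<epsilon> R \<longleftrightarrow>
     bialgebra B m u \<Delta> \<epsilon> \<and>
     R \<in> vspace (B \<times> B) \<and>
     (\<exists>R'\<in>vspace (B \<times> B).
        bmul2 B m R R' = tens u u \<and> bmul2 B m R' R = tens u u \<and>
        (\<forall>x\<in>vspace B. swap_tens (lin_ext B \<Delta> x) = bmul2 B m (bmul2 B m R (lin_ext B \<Delta> x)) R')) \<and>
     lin_ext (B \<times> B) (comul_left \<Delta>) R =
       bmul3 B m (\<lambda>(x, y, z). R (x, z) * u y) (\<lambda>(x, y, z). u x * R (y, z)) \<and>
     lin_ext (B \<times> B) (comul_right \<Delta>) R =
       bmul3 B m (\<lambda>(x, y, z). R (x, z) * u y) (\<lambda>(x, y, z). R (x, y) * u z)"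

text \<open>Basis element (x,a) stands for delta_x tensor a.\<close>
definition D_basis :: "'g monoid \<Rightarrow> 'h monoid \<Rightarrow> ('h \<times> 'g) set" where
  "D_basis G H = carrier H \<times> carrier G"

definition D_mult :: "'g monoid \<Rightarrow> ('g \<Rightarrow> 'h \<Rightarrow> 'h) \<Rightarrow> 'h \<times> 'g \<Rightarrow> 'h \<times> 'g \<Rightarrow> 'h \<times> 'g \<Rightarrow> 'k::field" where
  "D_mult G act p q =
     (if fst p = act (snd p) (fst q) then bvec (fst p, snd p \<otimes>\<^bsub>G\<^esub> snd q) else (\<lambda>_. 0))"

definition D_unit :: "'g monoid \<Rightarrow> 'h monoid \<Rightarrow> 'h \<times> 'g \<Rightarrow> 'k::field" where
  "D_unit G H = (\<lambda>q. \<Sum>x\<in>carrier H. bvec (x, \<one>\<^bsub>G\<^esub>) q)"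

definition D_comul :: "'h monoid \<Rightarrow> 'h \<times> 'g \<Rightarrow> ('h \<times> 'g) \<times> ('h \<times> 'g) \<Rightarrow> 'k::field" where
  "D_comul H p =
     (\<lambda>q. \<Sum>h\<in>carrier H. tens (bvec (h, snd p)) (bvec (inv\<^bsub>H\<^esub> h \<otimes>\<^bsub>H\<^esub> fst p, snd p)) q)"

definition D_counit :: "'h monoid \<Rightarrow> 'h \<times> 'g \<Rightarrow> 'k::field" where
  "D_counit H p = (if fst p = \<one>\<^bsub>H\<^esub> then 1 else 0)"

definition D_R :: "'g monoid \<Rightarrow> 'h monoid \<Rightarrow> ('h \<Rightarrow> 'g) \<Rightarrow> ('h \<times> 'g) \<times> ('h \<times> 'g) \<Rightarrow> 'k::field" where
  "D_R G H \<gamma> = (\<lambda>q. \<Sum>h\<in>carrier H.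
      tens (bvec (h, \<one>\<^bsub>G\<^esub>)) (\<lambda>r. \<Sum>x\<in>carrier H. bvec (x, \<gamma> h) r) q)"

end

theory Submission
  imports Defs
begin

text \<open>A vector of \<open>D(G,H)\<close> is a function \<open>v\<close> on \<open>H \<times> G\<close>, \<open>v (x, a)\<close> being the
  coefficient of \<open>\<delta>\<^sub>x \<otimes> a\<close>. In these coordinates the product is the twisted convolution
  \<open>(v w) (x, e) = \<Sum>\<^sub>a v (x, a) w (a\<^sup>-\<^sup>1 \<cdot> x, a\<^sup>-\<^sup>1 e)\<close> and the coproduct is
  \<open>(\<Delta> v) ((h, a), (k, a)) = v (h k, a)\<close>, so every bialgebra axiom reduces to reindexing
  finite sums over \<open>G\<close>; for this it suffices that \<open>G\<close> acts on \<open>H\<close> by automorphisms.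
  The R-matrix is the indicator function of \<open>{((x, 1), (y, \<gamma> x))}\<close> and its inverse that of
  \<open>{((x, 1), (y, \<gamma>(x)\<^sup>-\<^sup>1))}\<close>. In \<open>R \<Delta>(v)\<close> the Peiffer identity
  \<open>h (\<gamma>(h)\<^sup>-\<^sup>1 \<cdot> k) = k h\<close> swaps the two tensor factors, and the right factor \<open>R\<^sup>-\<^sup>1\<close>
  repairs the \<open>G\<close>-components by equivariance of \<open>\<gamma>\<close>. The hexagon identities only use that
  \<open>\<gamma>\<close> is a homomorphism.\<close>

lemma sum_delta_conj:
  assumes "finite A"
  shows "(\<Sum>x\<in>A. if x = t \<and> P then f x else 0) = (if t \<in> A \<and> P then f t else 0)"
  using assms by (cases P) simp_all

lemma (in group) sum_reindex_mult_left:
  assumes "b \<in> carrier G"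
  shows "(\<Sum>a\<in>carrier G. f a) = (\<Sum>d\<in>carrier G. f (b \<otimes> d))"
proof -
  have "bij_betw (\<lambda>d. b \<otimes> d) (carrier G) (carrier G)"
    by (rule bij_betw_byWitness[where f'="\<lambda>a. inv b \<otimes> a"])
       (use assms in \<open>auto simp: m_assoc[symmetric]\<close>)
  then show ?thesis
    by (rule sum.reindex_bij_betw[symmetric])
qed

lemma vspace_outside: "v \<in> vspace A \<Longrightarrow> c \<notin> A \<Longrightarrow> v c = 0"
  by (simp add: vspace_def)

locale finite_aut_action =
  G: group G + H: group H
  for G :: "'g monoid" and H :: "'h monoid" and act :: "'g \<Rightarrow> 'h \<Rightarrow> 'h" +
  assumes act_hom: "g \<in> carrier G \<Longrightarrow> act g \<in> hom H H"
    and act_one_left [simp]: "h \<in> carrier H \<Longrightarrow> act \<one>\<^bsub>G\<^esub> h = h"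
    and act_mult_left:
      "\<lbrakk>g1 \<in> carrier G; g2 \<in> carrier G; h \<in> carrier H\<rbrakk> \<Longrightarrow>
         act (g1 \<otimes>\<^bsub>G\<^esub> g2) h = act g1 (act g2 h)"
    and finite_G: "finite (carrier G)"
    and finite_H: "finite (carrier H)"
begin

lemma act_group_hom: "g \<in> carrier G \<Longrightarrow> group_hom H H (act g)"
  using act_hom by (simp add: group_hom_def group_hom_axioms_def H.group_axioms)

lemma act_closed [simp]: "g \<in> carrier G \<Longrightarrow> h \<in> carrier H \<Longrightarrow> act g h \<in> carrier H"
  using group_hom.hom_closed[OF act_group_hom] by blast

lemma act_mult [simp]:
  "\<lbrakk>g \<in> carrier G; h \<in> carrier H; k \<in> carrier H\<rbrakk> \<Longrightarrow>
     act g (h \<otimes>\<^bsub>H\<^esub> k) = act g h \<otimes>\<^bsub>H\<^esub> act g k"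
  using group_hom.hom_mult[OF act_group_hom] by blast

lemma act_one [simp]: "g \<in> carrier G \<Longrightarrow> act g \<one>\<^bsub>H\<^esub> = \<one>\<^bsub>H\<^esub>"
  using group_hom.hom_one[OF act_group_hom] by blast

lemma act_inv_act [simp]:
  "g \<in> carrier G \<Longrightarrow> h \<in> carrier H \<Longrightarrow> act (inv\<^bsub>G\<^esub> g) (act g h) = h"
  by (metis act_mult_left act_one_left G.inv_closed G.l_inv)

lemma act_act_inv [simp]:
  "g \<in> carrier G \<Longrightarrow> h \<in> carrier H \<Longrightarrow> act g (act (inv\<^bsub>G\<^esub> g) h) = h"
  by (metis act_mult_left act_one_left G.inv_closed G.r_inv)

abbreviation "B \<equiv> D_basis G H"

lemma mem_D_basis: "p \<in> B \<longleftrightarrow> fst p \<in> carrier H \<and> snd p \<in> carrier G"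
  by (cases p) (simp add: D_basis_def)

lemma finite_D_basis: "finite B"
  using finite_G finite_H by (simp add: D_basis_def)

lemma sum_D_basis: "(\<Sum>p\<in>B. f p) = (\<Sum>x\<in>carrier H. \<Sum>a\<in>carrier G. f (x, a))"
  unfolding D_basis_def by (rule sum.cartesian_product')

definition ldiv :: "'g \<Rightarrow> 'h \<times> 'g \<Rightarrow> 'h \<times> 'g" where
  "ldiv a c = (act (inv\<^bsub>G\<^esub> a) (fst c), inv\<^bsub>G\<^esub> a \<otimes>\<^bsub>G\<^esub> snd c)"

lemma ldiv_in_D_basis: "a \<in> carrier G \<Longrightarrow> c \<in> B \<Longrightarrow> ldiv a c \<in> B"
  by (simp add: ldiv_def mem_D_basis)

lemma ldiv_one [simp]: "c \<in> B \<Longrightarrow> ldiv \<one>\<^bsub>G\<^esub> c = c"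
  by (simp add: ldiv_def mem_D_basis)

lemma ldiv_mult:
  "\<lbrakk>a \<in> carrier G; b \<in> carrier G; c \<in> B\<rbrakk> \<Longrightarrow> ldiv (a \<otimes>\<^bsub>G\<^esub> b) c = ldiv b (ldiv a c)"
  by (simp add: ldiv_def mem_D_basis G.inv_mult_group act_mult_left G.m_assoc)

lemma ldiv_mult_left:
  "b \<in> carrier G \<Longrightarrow> d \<in> carrier G \<Longrightarrow> ldiv b (fst c, b \<otimes>\<^bsub>G\<^esub> d) = (fst (ldiv b c), d)"
  by (simp add: ldiv_def G.m_assoc[symmetric])

lemma D_mult_basis:
  assumes "p \<in> B" "q \<in> B"
  shows "(D_mult G act p q c :: 'k::field) =
    (if c \<in> B \<and> fst c = fst p \<and> q = ldiv (snd p) c then 1 else 0)"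
proof -
  obtain x a y b z e where pqc: "p = (x, a)" "q = (y, b)" "c = (z, e)"
    by (metis prod.collapse)
  have "x \<in> carrier H" "a \<in> carrier G" "y \<in> carrier H" "b \<in> carrier G"
    using assms pqc by (auto simp: D_basis_def)
  then have "(x = act a y \<and> (z, e) = (x, a \<otimes>\<^bsub>G\<^esub> b)) \<longleftrightarrow>
      (z \<in> carrier H \<and> e \<in> carrier G) \<and> z = x \<and>
      (y, b) = (act (inv\<^bsub>G\<^esub> a) z, inv\<^bsub>G\<^esub> a \<otimes>\<^bsub>G\<^esub> e)"
    by (auto simp: G.inv_solve_left G.m_assoc[symmetric])
  then show ?thesis
    unfolding pqc D_mult_def bvec_def ldiv_def mem_D_basis fst_conv snd_conv
    by (simp only: if_if_eq_conj if_distrib[of "\<lambda>f. f (z, e)"] if_True if_False)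
qed

lemma sum_sum_D_mult:
  "(\<Sum>p\<in>B. \<Sum>q\<in>B. F p q * (D_mult G act p q c :: 'k::field)) =
   (if c \<in> B then \<Sum>a\<in>carrier G. F (fst c, a) (ldiv a c) else 0)"
proof -
  have inner: "(\<Sum>q\<in>B. F p q * (D_mult G act p q c :: 'k)) =
      (if fst p = fst c \<and> c \<in> B then F p (ldiv (snd p) c) else 0)" if p: "p \<in> B" for p
  proof -
    have "(\<Sum>q\<in>B. F p q * (D_mult G act p q c :: 'k)) =
        (\<Sum>q\<in>B. if q = ldiv (snd p) c \<and> (fst p = fst c \<and> c \<in> B) then F p q else 0)"
      using p by (intro sum.cong refl) (simp add: D_mult_basis conj_commute)
    then show ?thesis
      using p finite_D_basis by (auto simp: sum_delta_conj ldiv_def mem_D_basis)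
  qed
  have "(\<Sum>p\<in>B. \<Sum>q\<in>B. F p q * (D_mult G act p q c :: 'k)) =
      (\<Sum>p\<in>B. if fst p = fst c \<and> c \<in> B then F p (ldiv (snd p) c) else 0)"
    by (rule sum.cong[OF refl]) (rule inner)
  also have "\<dots> = (\<Sum>a\<in>carrier G. \<Sum>x\<in>carrier H.
      if x = fst c \<and> c \<in> B then F (x, a) (ldiv a c) else 0)"
    unfolding sum_D_basis fst_conv snd_conv by (rule sum.swap)
  also have "\<dots> = (if c \<in> B then \<Sum>a\<in>carrier G. F (fst c, a) (ldiv a c) else 0)"
    using finite_H by (cases "c \<in> B") (auto simp: sum_delta_conj mem_D_basis)
  finally show ?thesis .
qed

lemma bmul_D_mult:
  "bmul B (D_mult G act) v w c =
   (if c \<in> B then \<Sum>a\<in>carrier G. v (fst c, a) * (w (ldiv a c) :: 'k::field) else 0)"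
  unfolding bmul_def by (rule sum_sum_D_mult)

lemma bmul2_D_mult:
  "bmul2 B (D_mult G act) V W (c1, c2) =
   (if c1 \<in> B \<and> c2 \<in> B then
      \<Sum>a1\<in>carrier G. \<Sum>a2\<in>carrier G.
        V ((fst c1, a1), (fst c2, a2)) * (W (ldiv a1 c1, ldiv a2 c2) :: 'k::field)
    else 0)"
proof -
  let ?m = "D_mult G act :: _ \<Rightarrow> _ \<Rightarrow> _ \<Rightarrow> 'k"
  have "bmul2 B ?m V W (c1, c2) =
      (\<Sum>p1\<in>B. \<Sum>p2\<in>B. \<Sum>q1\<in>B. \<Sum>q2\<in>B. V (p1, p2) * W (q1, q2) * (?m p1 q1 c1 * ?m p2 q2 c2))"
    by (simp add: bmul_def tens_mult_def tens_def sum.cartesian_product')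
  also have "\<dots> = (\<Sum>p1\<in>B. \<Sum>q1\<in>B. \<Sum>p2\<in>B. \<Sum>q2\<in>B.
      V (p1, p2) * W (q1, q2) * (?m p1 q1 c1 * ?m p2 q2 c2))"
    by (rule sum.cong[OF refl], rule sum.swap)
  also have "\<dots> = (\<Sum>p1\<in>B. \<Sum>q1\<in>B. \<Sum>p2\<in>B. \<Sum>q2\<in>B.
      (V (p1, p2) * W (q1, q2) * ?m p1 q1 c1) * ?m p2 q2 c2)"
    by (simp only: ac_simps)
  also have "\<dots> = (\<Sum>p1\<in>B. \<Sum>q1\<in>B. if c2 \<in> B then
      \<Sum>a2\<in>carrier G. V (p1, (fst c2, a2)) * W (q1, ldiv a2 c2) * ?m p1 q1 c1 else 0)"
    by (simp only: sum_sum_D_mult)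
  also have "\<dots> = (if c2 \<in> B then \<Sum>p1\<in>B. \<Sum>q1\<in>B.
      (\<Sum>a2\<in>carrier G. V (p1, (fst c2, a2)) * W (q1, ldiv a2 c2)) * ?m p1 q1 c1 else 0)"
    by (cases "c2 \<in> B") (simp_all add: sum_distrib_right)
  also have "\<dots> = (if c1 \<in> B \<and> c2 \<in> B then
      \<Sum>a1\<in>carrier G. \<Sum>a2\<in>carrier G. V ((fst c1, a1), (fst c2, a2)) * W (ldiv a1 c1, ldiv a2 c2)
    else 0)"
    by (simp only: sum_sum_D_mult) simp
  finally show ?thesis .
qed

lemma bmul3_D_mult:
  "bmul3 B (D_mult G act) X Y (c1, c2, c3) =
   (if c1 \<in> B \<and> c2 \<in> B \<and> c3 \<in> B then
      \<Sum>a1\<in>carrier G. \<Sum>a2\<in>carrier G. \<Sum>a3\<in>carrier G.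
        X ((fst c1, a1), (fst c2, a2), (fst c3, a3)) *
        (Y (ldiv a1 c1, ldiv a2 c2, ldiv a3 c3) :: 'k::field)
    else 0)"
proof -
  let ?m = "D_mult G act :: _ \<Rightarrow> _ \<Rightarrow> _ \<Rightarrow> 'k"
  have "bmul3 B ?m X Y (c1, c2, c3) =
      (\<Sum>p1\<in>B. \<Sum>p\<in>B \<times> B. \<Sum>q1\<in>B. \<Sum>q\<in>B \<times> B.
         X (p1, p) * Y (q1, q) * (?m p1 q1 c1 * tens_mult ?m ?m p q (c2, c3)))"
    by (simp add: bmul_def tens_mult_def tens_def sum.cartesian_product')
  also have "\<dots> = (\<Sum>p1\<in>B. \<Sum>q1\<in>B.
      bmul2 B ?m (\<lambda>p. X (p1, p) * ?m p1 q1 c1) (\<lambda>q. Y (q1, q)) (c2, c3))"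
    unfolding bmul_def by (intro sum.cong refl trans[OF sum.swap]) (simp add: ac_simps)
  also have "\<dots> = (\<Sum>p1\<in>B. \<Sum>q1\<in>B. (if c2 \<in> B \<and> c3 \<in> B then
      \<Sum>a2\<in>carrier G. \<Sum>a3\<in>carrier G.
        X (p1, (fst c2, a2), (fst c3, a3)) * Y (q1, ldiv a2 c2, ldiv a3 c3) else 0) * ?m p1 q1 c1)"
    unfolding bmul2_D_mult by (intro sum.cong refl) (simp add: ac_simps sum_distrib_left)
  also have "\<dots> = (if c1 \<in> B \<and> c2 \<in> B \<and> c3 \<in> B then
      \<Sum>a1\<in>carrier G. \<Sum>a2\<in>carrier G. \<Sum>a3\<in>carrier G.
        X ((fst c1, a1), (fst c2, a2), (fst c3, a3)) * Y (ldiv a1 c1, ldiv a2 c2, ldiv a3 c3)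
    else 0)"
    by (simp only: sum_sum_D_mult) (auto intro: sum.neutral)
  finally show ?thesis .
qed

lemma D_unit_apply:
  "(D_unit G H c :: 'k::field) = (if fst c \<in> carrier H \<and> snd c = \<one>\<^bsub>G\<^esub> then 1 else 0)"
proof -
  have "(D_unit G H c :: 'k) =
      (\<Sum>x\<in>carrier H. if x = fst c \<and> snd c = \<one>\<^bsub>G\<^esub> then 1 else 0)"
    unfolding D_unit_def bvec_def by (rule sum.cong) (auto simp: prod_eq_iff)
  then show ?thesis
    using finite_H by (simp add: sum_delta_conj)
qed

lemma D_comul_apply:
  "(D_comul H p ((h, a), (k, b)) :: 'k::field) =
   (if h \<in> carrier H \<and> a = snd p \<and> b = snd p \<and> k = inv\<^bsub>H\<^esub> h \<otimes>\<^bsub>H\<^esub> fst p then 1 else 0)"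
proof -
  have "(D_comul H p ((h, a), (k, b)) :: 'k) = (\<Sum>x\<in>carrier H.
      if x = h \<and> (a = snd p \<and> b = snd p \<and> k = inv\<^bsub>H\<^esub> h \<otimes>\<^bsub>H\<^esub> fst p) then 1 else 0)"
    unfolding D_comul_def bvec_def tens_def by (rule sum.cong) auto
  then show ?thesis
    using finite_H by (simp add: sum_delta_conj)
qed

lemma lin_ext_D_comul:
  "lin_ext B (D_comul H) v ((h, a), (k, b)) =
   (if h \<in> carrier H \<and> k \<in> carrier H \<and> a \<in> carrier G \<and> b = a
    then v (h \<otimes>\<^bsub>H\<^esub> k, a) else (0 :: 'k::field))"
proof -
  have "v p * D_comul H p ((h, a), (k, b)) =
      (if p = (h \<otimes>\<^bsub>H\<^esub> k, a) \<and> (h \<in> carrier H \<and> k \<in> carrier H \<and> b = a) then v p else 0)"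
    if "p \<in> B" for p
    using that by (auto simp: D_comul_apply mem_D_basis H.inv_solve_left H.m_assoc[symmetric])
  then have "lin_ext B (D_comul H) v ((h, a), (k, b)) = (\<Sum>p\<in>B.
      if p = (h \<otimes>\<^bsub>H\<^esub> k, a) \<and> (h \<in> carrier H \<and> k \<in> carrier H \<and> b = a) then v p else 0)"
    unfolding lin_ext_def by (rule sum.cong[OF refl])
  then show ?thesis
    using finite_D_basis by (auto simp: sum_delta_conj mem_D_basis)
qed

lemma lin_ext_comul_left_D_comul:
  "lin_ext (B \<times> B) (comul_left (D_comul H)) V ((h, a), (k, b), l) =
   (if h \<in> carrier H \<and> k \<in> carrier H \<and> a \<in> carrier G \<and> b = a \<and> l \<in> B
    then V ((h \<otimes>\<^bsub>H\<^esub> k, a), l) else (0 :: 'k::field))"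
proof -
  have "lin_ext (B \<times> B) (comul_left (D_comul H)) V ((h, a), (k, b), l) =
      (\<Sum>p1\<in>B. \<Sum>p2\<in>B. if p2 = l then V (p1, p2) * D_comul H p1 ((h, a), (k, b)) else 0)"
    unfolding lin_ext_def sum.cartesian_product' comul_left_def bvec_def
    by (auto intro!: sum.cong)
  also have "\<dots> = (if l \<in> B then lin_ext B (D_comul H) (\<lambda>p. V (p, l)) ((h, a), (k, b)) else 0)"
    using finite_D_basis unfolding lin_ext_def by (simp add: sum_delta_conj)
  finally show ?thesis
    by (auto simp: lin_ext_D_comul)
qed

lemma lin_ext_comul_right_D_comul:
  "lin_ext (B \<times> B) (comul_right (D_comul H)) V (l, (h, a), (k, b)) =
   (if h \<in> carrier H \<and> k \<in> carrier H \<and> a \<in> carrier G \<and> b = a \<and> l \<in> B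
    then V (l, (h \<otimes>\<^bsub>H\<^esub> k, a)) else (0 :: 'k::field))"
proof -
  have "lin_ext (B \<times> B) (comul_right (D_comul H)) V (l, (h, a), (k, b)) =
      (\<Sum>p1\<in>B. if p1 = l then \<Sum>p2\<in>B. V (p1, p2) * D_comul H p2 ((h, a), (k, b)) else 0)"
    unfolding lin_ext_def sum.cartesian_product' comul_right_def bvec_def tens_def
    by (auto intro!: sum.cong)
  also have "\<dots> = (if l \<in> B then lin_ext B (D_comul H) (\<lambda>p. V (l, p)) ((h, a), (k, b)) else 0)"
    using finite_D_basis unfolding lin_ext_def by (simp add: sum_delta_conj)
  finally show ?thesis
    by (auto simp: lin_ext_D_comul)
qed

lemma lin_form_D_counit:
  "lin_form B (D_counit H) v = (\<Sum>a\<in>carrier G. (v (\<one>\<^bsub>H\<^esub>, a) :: 'k::field))"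
proof -
  have "lin_form B (D_counit H) v =
      (\<Sum>a\<in>carrier G. \<Sum>x\<in>carrier H. if x = \<one>\<^bsub>H\<^esub> then v (x, a) else 0)"
    unfolding lin_form_def sum_D_basis D_counit_def by (subst sum.swap) (auto intro!: sum.cong)
  then show ?thesis
    using finite_H by (simp add: sum_delta_conj)
qed

lemma D_mult_in_vspace: "p \<in> B \<Longrightarrow> q \<in> B \<Longrightarrow> (D_mult G act p q :: _ \<Rightarrow> 'k::field) \<in> vspace B"
  unfolding vspace_def by (auto simp: D_mult_basis)

lemma D_unit_in_vspace: "(D_unit G H :: _ \<Rightarrow> 'k::field) \<in> vspace B"
  unfolding vspace_def by (auto simp: D_unit_apply mem_D_basis)

lemma D_comul_in_vspace: "p \<in> B \<Longrightarrow> (D_comul H p :: _ \<Rightarrow> 'k::field) \<in> vspace (B \<times> B)"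
  unfolding vspace_def by (auto simp: D_comul_apply mem_D_basis)

lemma D_mult_assoc:
  "bmul B (D_mult G act) (bmul B (D_mult G act) x y) z =
   bmul B (D_mult G act) x (bmul B (D_mult G act) y z :: _ \<Rightarrow> 'k::field)"
proof
  fix c :: "'h \<times> 'g"
  show "bmul B (D_mult G act) (bmul B (D_mult G act) x y) z c =
        bmul B (D_mult G act) x (bmul B (D_mult G act) y z) c"
  proof (cases "c \<in> B")
    case False
    then show ?thesis by (simp add: bmul_D_mult)
  next
    case True
    have "bmul B (D_mult G act) (bmul B (D_mult G act) x y) z c =
        (\<Sum>a\<in>carrier G. \<Sum>b\<in>carrier G. x (fst c, b) * y (ldiv b (fst c, a)) * z (ldiv a c))"
      using True by (simp add: bmul_D_mult mem_D_basis sum_distrib_right)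
    also have "\<dots> = (\<Sum>b\<in>carrier G. \<Sum>a\<in>carrier G.
        x (fst c, b) * y (ldiv b (fst c, a)) * z (ldiv a c))"
      by (rule sum.swap)
    also have "\<dots> = (\<Sum>b\<in>carrier G. \<Sum>d\<in>carrier G.
        x (fst c, b) * y (ldiv b (fst c, b \<otimes>\<^bsub>G\<^esub> d)) * z (ldiv (b \<otimes>\<^bsub>G\<^esub> d) c))"
      by (intro sum.cong refl G.sum_reindex_mult_left)
    also have "\<dots> = (\<Sum>b\<in>carrier G. x (fst c, b) *
        (\<Sum>d\<in>carrier G. y (fst (ldiv b c), d) * z (ldiv d (ldiv b c))))"
      using True by (simp add: ldiv_mult ldiv_mult_left sum_distrib_left mult.assoc)
    also have "\<dots> = bmul B (D_mult G act) x (bmul B (D_mult G act) y z) c"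
      using True by (simp add: bmul_D_mult ldiv_in_D_basis)
    finally show ?thesis .
  qed
qed

lemma D_unit_left:
  assumes "v \<in> vspace B"
  shows "bmul B (D_mult G act) (D_unit G H) v = (v :: _ \<Rightarrow> 'k::field)"
proof
  fix c :: "'h \<times> 'g"
  show "bmul B (D_mult G act) (D_unit G H) v c = v c"
  proof (cases "c \<in> B")
    case False
    then show ?thesis using assms by (simp add: bmul_D_mult vspace_outside)
  next
    case True
    then have "bmul B (D_mult G act) (D_unit G H) v c =
        (\<Sum>a\<in>carrier G. if a = \<one>\<^bsub>G\<^esub> then v (ldiv a c) else 0)"
      by (auto simp: bmul_D_mult D_unit_apply mem_D_basis intro!: sum.cong)
    then show ?thesis
      using True finite_G by (simp add: sum_delta_conj)
  qed
qed

lemma D_unit_right: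
  assumes "v \<in> vspace B"
  shows "bmul B (D_mult G act) v (D_unit G H) = (v :: _ \<Rightarrow> 'k::field)"
proof
  fix c :: "'h \<times> 'g"
  show "bmul B (D_mult G act) v (D_unit G H) c = v c"
  proof (cases "c \<in> B")
    case False
    then show ?thesis using assms by (simp add: bmul_D_mult vspace_outside)
  next
    case True
    then have "bmul B (D_mult G act) v (D_unit G H) c =
        (\<Sum>a\<in>carrier G. if a = snd c then v (fst c, a) else 0)"
      by (auto simp: bmul_D_mult D_unit_apply mem_D_basis ldiv_def G.inv_solve_left'
          intro!: sum.cong)
    then show ?thesis
      using True finite_G by (simp add: sum_delta_conj mem_D_basis)
  qed
qed

lemma D_coassoc:
  "lin_ext (B \<times> B) (comul_left (D_comul H)) (lin_ext B (D_comul H) x) =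
   lin_ext (B \<times> B) (comul_right (D_comul H)) (lin_ext B (D_comul H) (x :: _ \<Rightarrow> 'k::field))"
proof
  fix P :: "('h \<times> 'g) \<times> ('h \<times> 'g) \<times> ('h \<times> 'g)"
  obtain h a k b l c where "P = ((h, a), (k, b), (l, c))"
    by (metis prod.collapse)
  then show "lin_ext (B \<times> B) (comul_left (D_comul H)) (lin_ext B (D_comul H) x) P =
      lin_ext (B \<times> B) (comul_right (D_comul H)) (lin_ext B (D_comul H) x) P"
    by (auto simp: lin_ext_comul_left_D_comul lin_ext_comul_right_D_comul lin_ext_D_comul
        mem_D_basis H.m_assoc)
qed

lemma D_counit_left:
  assumes "v \<in> vspace B"
  shows "(\<lambda>y. \<Sum>a\<in>B. D_counit H a * lin_ext B (D_comul H) v (a, y)) = (v :: _ \<Rightarrow> 'k::field)"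
proof
  fix y :: "'h \<times> 'g"
  obtain k b where y: "y = (k, b)" by force
  have "(\<Sum>a\<in>B. D_counit H a * lin_ext B (D_comul H) v (a, y)) =
      (\<Sum>h\<in>carrier H. if h = \<one>\<^bsub>H\<^esub> then
         \<Sum>a\<in>carrier G. if a = b \<and> k \<in> carrier H then v (h \<otimes>\<^bsub>H\<^esub> k, a) else 0
       else 0)"
    unfolding sum_D_basis y lin_ext_D_comul D_counit_def by (auto intro!: sum.cong)
  also have "\<dots> = v y"
    using assms finite_G finite_H by (auto simp: sum_delta_conj y vspace_def D_basis_def)
  finally show "(\<Sum>a\<in>B. D_counit H a * lin_ext B (D_comul H) v (a, y)) = v y" .
qed

lemma D_counit_right:
  assumes "v \<in> vspace B"
  shows "(\<lambda>y. \<Sum>a\<in>B. lin_ext B (D_comul H) v (y, a) * D_counit H a) = (v :: _ \<Rightarrow> 'k::field)"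
proof
  fix y :: "'h \<times> 'g"
  obtain h b where y: "y = (h, b)" by force
  have "(\<Sum>a\<in>B. lin_ext B (D_comul H) v (y, a) * D_counit H a) =
      (\<Sum>k\<in>carrier H. if k = \<one>\<^bsub>H\<^esub> then
         \<Sum>a\<in>carrier G. if a = b \<and> h \<in> carrier H then v (h \<otimes>\<^bsub>H\<^esub> k, b) else 0
       else 0)"
    unfolding sum_D_basis y lin_ext_D_comul D_counit_def by (auto intro!: sum.cong)
  also have "\<dots> = v y"
    using assms finite_G finite_H by (auto simp: sum_delta_conj y vspace_def D_basis_def)
  finally show "(\<Sum>a\<in>B. lin_ext B (D_comul H) v (y, a) * D_counit H a) = v y" .
qed

lemma D_comul_mult:
  "lin_ext B (D_comul H) (bmul B (D_mult G act) x y) =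
   bmul2 B (D_mult G act) (lin_ext B (D_comul H) x) (lin_ext B (D_comul H) (y :: _ \<Rightarrow> 'k::field))"
proof
  fix P :: "('h \<times> 'g) \<times> ('h \<times> 'g)"
  obtain h a k b where P: "P = ((h, a), (k, b))"
    by (metis prod.collapse)
  show "lin_ext B (D_comul H) (bmul B (D_mult G act) x y) P =
      bmul2 B (D_mult G act) (lin_ext B (D_comul H) x) (lin_ext B (D_comul H) y) P"
  proof (cases "h \<in> carrier H \<and> k \<in> carrier H \<and> a \<in> carrier G \<and> b \<in> carrier G")
    case False
    then show ?thesis
      unfolding P lin_ext_D_comul bmul2_D_mult by (auto simp: mem_D_basis)
  next
    case True
    have "bmul2 B (D_mult G act) (lin_ext B (D_comul H) x) (lin_ext B (D_comul H) y) P =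
        (\<Sum>a1\<in>carrier G. \<Sum>a2\<in>carrier G. if a2 = a1 \<and> b = a then
           x (h \<otimes>\<^bsub>H\<^esub> k, a1) * y (act (inv\<^bsub>G\<^esub> a1) (h \<otimes>\<^bsub>H\<^esub> k), inv\<^bsub>G\<^esub> a1 \<otimes>\<^bsub>G\<^esub> a)
         else 0)"
      unfolding P bmul2_D_mult lin_ext_D_comul using True
      by (auto simp: mem_D_basis ldiv_def lin_ext_D_comul intro!: sum.cong)
    also have "\<dots> = lin_ext B (D_comul H) (bmul B (D_mult G act) x y) P"
      unfolding P lin_ext_D_comul bmul_D_mult using True finite_G
      by (auto simp: sum_delta_conj mem_D_basis ldiv_def intro!: sum.cong)
    finally show ?thesis by simp
  qed
qed

lemma D_comul_unit:
  "lin_ext B (D_comul H) (D_unit G H) = tens (D_unit G H) (D_unit G H :: _ \<Rightarrow> 'k::field)"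
proof
  fix P :: "('h \<times> 'g) \<times> ('h \<times> 'g)"
  obtain h a k b where "P = ((h, a), (k, b))"
    by (metis prod.collapse)
  then show "lin_ext B (D_comul H) (D_unit G H) P = tens (D_unit G H) (D_unit G H :: _ \<Rightarrow> 'k) P"
    by (auto simp: lin_ext_D_comul D_unit_apply tens_def)
qed

lemma D_counit_mult:
  "lin_form B (D_counit H) (bmul B (D_mult G act) x y) =
   lin_form B (D_counit H) x * lin_form B (D_counit H) (y :: _ \<Rightarrow> 'k::field)"
proof -
  have "lin_form B (D_counit H) (bmul B (D_mult G act) x y) =
      (\<Sum>a\<in>carrier G. \<Sum>b\<in>carrier G. x (\<one>\<^bsub>H\<^esub>, b) * y (\<one>\<^bsub>H\<^esub>, inv\<^bsub>G\<^esub> b \<otimes>\<^bsub>G\<^esub> a))"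
    unfolding lin_form_D_counit bmul_D_mult by (auto simp: mem_D_basis ldiv_def intro!: sum.cong)
  also have "\<dots> = (\<Sum>b\<in>carrier G. \<Sum>d\<in>carrier G.
      x (\<one>\<^bsub>H\<^esub>, b) * y (\<one>\<^bsub>H\<^esub>, inv\<^bsub>G\<^esub> b \<otimes>\<^bsub>G\<^esub> (b \<otimes>\<^bsub>G\<^esub> d)))"
    by (subst sum.swap) (intro sum.cong refl G.sum_reindex_mult_left)
  also have "\<dots> = lin_form B (D_counit H) x * lin_form B (D_counit H) y"
    unfolding lin_form_D_counit sum_product
    by (intro sum.cong refl) (simp add: G.m_assoc[symmetric])
  finally show ?thesis .
qed

lemma D_counit_unit: "lin_form B (D_counit H) (D_unit G H) = (1 :: 'k::field)"
proof -
  have "lin_form B (D_counit H) (D_unit G H) =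
      (\<Sum>a\<in>carrier G. if a = \<one>\<^bsub>G\<^esub> then 1 else (0 :: 'k))"
    unfolding lin_form_D_counit D_unit_apply by (auto intro!: sum.cong)
  then show ?thesis
    using finite_G by (simp add: sum_delta_conj)
qed

theorem D_bialgebra:
  "bialgebra B (D_mult G act :: _ \<Rightarrow> _ \<Rightarrow> _ \<Rightarrow> 'k::field) (D_unit G H) (D_comul H) (D_counit H)"
  unfolding bialgebra_def
  by (intro conjI ballI finite_D_basis D_mult_in_vspace D_unit_in_vspace D_comul_in_vspace
      D_mult_assoc D_unit_left D_unit_right D_coassoc D_counit_left D_counit_right
      D_comul_mult D_comul_unit D_counit_mult D_counit_unit)

text \<open>Coefficients of \<open>\<Sum>\<^sub>h (\<delta>\<^sub>h \<otimes> 1) \<otimes> (1 \<otimes> f h)\<close>: the R-matrix is \<open>R_of \<gamma>\<close>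
  and its inverse is \<open>R_of (\<lambda>h. \<gamma>(h)\<^sup>-\<^sup>1)\<close>.\<close>
definition R_of :: "('h \<Rightarrow> 'g) \<Rightarrow> ('h \<times> 'g) \<times> ('h \<times> 'g) \<Rightarrow> 'k::field" where
  "R_of f P = (if fst (fst P) \<in> carrier H \<and> snd (fst P) = \<one>\<^bsub>G\<^esub> \<and>
      fst (snd P) \<in> carrier H \<and> snd (snd P) = f (fst (fst P)) then 1 else 0)"

lemma R_of_apply [simp]:
  "R_of f ((x, a), (y, b)) =
   (if x \<in> carrier H \<and> a = \<one>\<^bsub>G\<^esub> \<and> y \<in> carrier H \<and> b = f x then 1 else 0)"
  by (simp add: R_of_def)

lemma R_of_in_vspace: "(\<And>h. h \<in> carrier H \<Longrightarrow> f h \<in> carrier G) \<Longrightarrow> R_of f \<in> vspace (B \<times> B)"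
  unfolding vspace_def by (auto simp: R_of_def mem_D_basis)

lemma bmul2_R_of_left:
  assumes "\<And>h. h \<in> carrier H \<Longrightarrow> f h \<in> carrier G"
  shows "bmul2 B (D_mult G act) (R_of f) W (c1, c2) =
    (if c1 \<in> B \<and> c2 \<in> B then W (c1, ldiv (f (fst c1)) c2) else (0 :: 'k::field))"
proof (cases "c1 \<in> B \<and> c2 \<in> B")
  case True
  then have "bmul2 B (D_mult G act) (R_of f) W (c1, c2) =
      (\<Sum>a1\<in>carrier G. if a1 = \<one>\<^bsub>G\<^esub> then
         \<Sum>a2\<in>carrier G. if a2 = f (fst c1) then W (ldiv a1 c1, ldiv a2 c2) else 0
       else 0)"
    by (auto simp: bmul2_D_mult mem_D_basis intro!: sum.cong)
  then show ?thesis
    using True assms finite_G by (auto simp: sum_delta_conj mem_D_basis)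
qed (auto simp: bmul2_D_mult)

lemma bmul2_R_of_right:
  assumes "\<And>h. h \<in> carrier H \<Longrightarrow> f h \<in> carrier G"
  shows "bmul2 B (D_mult G act) V (R_of f) ((z1, e1), (z2, e2)) =
    (if (z1, e1) \<in> B \<and> (z2, e2) \<in> B
     then V ((z1, e1), (z2, e2 \<otimes>\<^bsub>G\<^esub> inv\<^bsub>G\<^esub> f (act (inv\<^bsub>G\<^esub> e1) z1)))
     else (0 :: 'k::field))"
proof (cases "(z1, e1) \<in> B \<and> (z2, e2) \<in> B")
  case True
  then have z: "z1 \<in> carrier H" "e1 \<in> carrier G" "z2 \<in> carrier H" "e2 \<in> carrier G"
    by (auto simp: mem_D_basis)
  have coeff: "R_of f (ldiv a1 (z1, e1), ldiv a2 (z2, e2)) =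
      (if a1 = e1 \<and> a2 = e2 \<otimes>\<^bsub>G\<^esub> inv\<^bsub>G\<^esub> f (act (inv\<^bsub>G\<^esub> e1) z1) then 1 else 0)"
    if "a1 \<in> carrier G" "a2 \<in> carrier G" for a1 a2
  proof -
    have "f (act (inv\<^bsub>G\<^esub> a1) z1) \<in> carrier G"
      using assms that z by auto
    then have "(inv\<^bsub>G\<^esub> a1 \<otimes>\<^bsub>G\<^esub> e1 = \<one>\<^bsub>G\<^esub> \<and>
          inv\<^bsub>G\<^esub> a2 \<otimes>\<^bsub>G\<^esub> e2 = f (act (inv\<^bsub>G\<^esub> a1) z1)) \<longleftrightarrow>
        (a1 = e1 \<and> a2 = e2 \<otimes>\<^bsub>G\<^esub> inv\<^bsub>G\<^esub> f (act (inv\<^bsub>G\<^esub> e1) z1))"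
      using that z by (auto simp: G.inv_solve_left' G.inv_solve_right' G.m_assoc)
    then show ?thesis
      using that z by (simp add: ldiv_def)
  qed
  have "bmul2 B (D_mult G act) V (R_of f) ((z1, e1), (z2, e2)) =
      (\<Sum>a1\<in>carrier G. if a1 = e1 then
         \<Sum>a2\<in>carrier G. if a2 = e2 \<otimes>\<^bsub>G\<^esub> inv\<^bsub>G\<^esub> f (act (inv\<^bsub>G\<^esub> e1) z1)
           then V ((z1, a1), (z2, a2)) else 0
       else 0)"
    using True by (auto simp: bmul2_D_mult coeff simp del: R_of_apply intro!: sum.cong)
  moreover have "f (act (inv\<^bsub>G\<^esub> e1) z1) \<in> carrier G"
    using assms z by auto
  ultimately show ?thesis
    using True z finite_G by (auto simp: sum_delta_conj)
qed (auto simp: bmul2_D_mult)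

lemma R_of_mult_R_of:
  assumes "\<And>h. h \<in> carrier H \<Longrightarrow> f h \<in> carrier G" "\<And>h. h \<in> carrier H \<Longrightarrow> g h \<in> carrier G"
    and "\<And>h. h \<in> carrier H \<Longrightarrow> f h \<otimes>\<^bsub>G\<^esub> g h = \<one>\<^bsub>G\<^esub>"
  shows "bmul2 B (D_mult G act) (R_of f) (R_of g) = tens (D_unit G H) (D_unit G H :: _ \<Rightarrow> 'k::field)"
proof
  fix P :: "('h \<times> 'g) \<times> ('h \<times> 'g)"
  obtain z1 e1 z2 e2 where P: "P = ((z1, e1), (z2, e2))"
    by (metis prod.collapse)
  show "bmul2 B (D_mult G act) (R_of f) (R_of g) P = tens (D_unit G H) (D_unit G H :: _ \<Rightarrow> 'k) P"
  proof (cases "(z1, e1) \<in> B \<and> (z2, e2) \<in> B")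
    case True
    then have z: "z1 \<in> carrier H" "e1 \<in> carrier G" "z2 \<in> carrier H" "e2 \<in> carrier G"
      by (auto simp: mem_D_basis)
    moreover have fg: "f z1 \<in> carrier G" "g z1 \<in> carrier G"
      using assms(1,2) z by auto
    ultimately have "inv\<^bsub>G\<^esub> f z1 \<otimes>\<^bsub>G\<^esub> e2 = g z1 \<longleftrightarrow> e2 = \<one>\<^bsub>G\<^esub>"
      using assms(3)[of z1] by (simp add: G.inv_solve_left')
    then show ?thesis
      using True z fg by (simp add: P bmul2_R_of_left[OF assms(1)] tens_def D_unit_apply ldiv_def)
  qed (auto simp: P bmul2_R_of_left[OF assms(1)] tens_def D_unit_apply mem_D_basis)
qed

lemma bmul3_R13_left:
  assumes "\<And>h. h \<in> carrier H \<Longrightarrow> f h \<in> carrier G"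
  shows "bmul3 B (D_mult G act) (\<lambda>(x, y, z). R_of f (x, z) * D_unit G H y) Y (c1, c2, c3) =
    (if c1 \<in> B \<and> c2 \<in> B \<and> c3 \<in> B then Y (c1, c2, ldiv (f (fst c1)) c3) else (0 :: 'k::field))"
proof (cases "c1 \<in> B \<and> c2 \<in> B \<and> c3 \<in> B")
  case True
  then have "bmul3 B (D_mult G act) (\<lambda>(x, y, z). R_of f (x, z) * D_unit G H y) Y (c1, c2, c3) =
      (\<Sum>a1\<in>carrier G. if a1 = \<one>\<^bsub>G\<^esub> then
         \<Sum>a2\<in>carrier G. if a2 = \<one>\<^bsub>G\<^esub> then
           \<Sum>a3\<in>carrier G. if a3 = f (fst c1)
             then Y (ldiv a1 c1, ldiv a2 c2, ldiv a3 c3) else 0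
         else 0
       else 0)"
    by (auto simp: bmul3_D_mult D_unit_apply mem_D_basis intro!: sum.cong)
  then show ?thesis
    using True assms finite_G by (auto simp: sum_delta_conj mem_D_basis)
qed (auto simp: bmul3_D_mult)

end

locale finite_crossed_module = finite_aut_action G H act
  for G :: "'g monoid" and H :: "'h monoid" and act :: "'g \<Rightarrow> 'h \<Rightarrow> 'h" +
  fixes \<gamma> :: "'h \<Rightarrow> 'g"
  assumes \<gamma>_hom: "\<gamma> \<in> hom H G"
    and \<gamma>_equivariant:
      "\<lbrakk>g \<in> carrier G; h \<in> carrier H\<rbrakk> \<Longrightarrow> \<gamma> (act g h) = g \<otimes>\<^bsub>G\<^esub> \<gamma> h \<otimes>\<^bsub>G\<^esub> inv\<^bsub>G\<^esub> g"
    and peiffer: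
      "\<lbrakk>h \<in> carrier H; n \<in> carrier H\<rbrakk> \<Longrightarrow> act (\<gamma> h) n = h \<otimes>\<^bsub>H\<^esub> n \<otimes>\<^bsub>H\<^esub> inv\<^bsub>H\<^esub> h"

lemma finite_crossed_moduleI:
  assumes "crossed_module G H act \<gamma>" "finite (carrier G)" "finite (carrier H)"
  shows "finite_crossed_module G H act \<gamma>"
  using assms unfolding crossed_module_def finite_crossed_module_def finite_crossed_module_axioms_def
    finite_aut_action_def finite_aut_action_axioms_def iso_def
  by blast

context finite_crossed_module
begin

lemma \<gamma>_group_hom: "group_hom H G \<gamma>"
  using \<gamma>_hom by (simp add: group_hom_def group_hom_axioms_def G.group_axioms H.group_axioms)

lemma \<gamma>_closed [simp]: "h \<in> carrier H \<Longrightarrow> \<gamma> h \<in> carrier G"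
  using group_hom.hom_closed[OF \<gamma>_group_hom] by blast

lemma \<gamma>_mult [simp]:
  "h \<in> carrier H \<Longrightarrow> k \<in> carrier H \<Longrightarrow> \<gamma> (h \<otimes>\<^bsub>H\<^esub> k) = \<gamma> h \<otimes>\<^bsub>G\<^esub> \<gamma> k"
  using group_hom.hom_mult[OF \<gamma>_group_hom] by blast

lemma \<gamma>_inv [simp]: "h \<in> carrier H \<Longrightarrow> \<gamma> (inv\<^bsub>H\<^esub> h) = inv\<^bsub>G\<^esub> (\<gamma> h)"
  using group_hom.hom_inv[OF \<gamma>_group_hom] by blast

lemma mult_act_inv_\<gamma>:
  assumes "h \<in> carrier H" "k \<in> carrier H"
  shows "h \<otimes>\<^bsub>H\<^esub> act (inv\<^bsub>G\<^esub> \<gamma> h) k = k \<otimes>\<^bsub>H\<^esub> h"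
proof -
  have "act (inv\<^bsub>G\<^esub> \<gamma> h) k = inv\<^bsub>H\<^esub> h \<otimes>\<^bsub>H\<^esub> k \<otimes>\<^bsub>H\<^esub> h"
    using peiffer[of "inv\<^bsub>H\<^esub> h" k] assms by simp
  then show ?thesis
    using assms by (simp add: H.m_assoc[symmetric])
qed

lemma D_R_eq_R_of: "D_R G H \<gamma> = (R_of \<gamma> :: _ \<Rightarrow> 'k::field)"
proof
  fix P :: "('h \<times> 'g) \<times> ('h \<times> 'g)"
  obtain x a y b where P: "P = ((x, a), (y, b))"
    by (metis prod.collapse)
  have "(D_R G H \<gamma> P :: 'k) = (\<Sum>h\<in>carrier H. if h = x \<and> a = \<one>\<^bsub>G\<^esub> then
      \<Sum>z\<in>carrier H. if z = y \<and> b = \<gamma> h then 1 else 0 else 0)"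
    unfolding P D_R_def bvec_def tens_def by (auto intro!: sum.cong simp: sum_distrib_left)
  then show "D_R G H \<gamma> P = (R_of \<gamma> P :: 'k)"
    using finite_H by (simp add: P sum_delta_conj)
qed

lemma R_mult_comul:
  assumes "z1 \<in> carrier H" "e1 \<in> carrier G" "z2 \<in> carrier H" "e2 \<in> carrier G"
  shows "bmul2 B (D_mult G act) (R_of \<gamma>) (lin_ext B (D_comul H) x) ((z1, e1), (z2, e2)) =
    (if e2 = \<gamma> z1 \<otimes>\<^bsub>G\<^esub> e1 then x (z2 \<otimes>\<^bsub>H\<^esub> z1, e1) else (0 :: 'k::field))"
  using assms
  by (auto simp: bmul2_R_of_left mem_D_basis ldiv_def lin_ext_D_comul
      mult_act_inv_\<gamma> G.inv_solve_left')

lemma D_R_conj_comul: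
  "swap_tens (lin_ext B (D_comul H) x) =
   bmul2 B (D_mult G act) (bmul2 B (D_mult G act) (R_of \<gamma>) (lin_ext B (D_comul H) x))
     (R_of (\<lambda>h. inv\<^bsub>G\<^esub> \<gamma> h) :: _ \<Rightarrow> 'k::field)"
proof
  fix P :: "('h \<times> 'g) \<times> ('h \<times> 'g)"
  obtain z1 c1 z2 c2 where P: "P = ((z1, c1), (z2, c2))"
    by (metis prod.collapse)
  show "swap_tens (lin_ext B (D_comul H) x) P =
      bmul2 B (D_mult G act) (bmul2 B (D_mult G act) (R_of \<gamma>) (lin_ext B (D_comul H) x))
        (R_of (\<lambda>h. inv\<^bsub>G\<^esub> \<gamma> h)) P"
  proof (cases "(z1, c1) \<in> B \<and> (z2, c2) \<in> B")
    case True
    then have z: "z1 \<in> carrier H" "c1 \<in> carrier G" "z2 \<in> carrier H" "c2 \<in> carrier G"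
      by (auto simp: mem_D_basis)
    have "c2 \<otimes>\<^bsub>G\<^esub> \<gamma> (act (inv\<^bsub>G\<^esub> c1) z1) =
        (c2 \<otimes>\<^bsub>G\<^esub> inv\<^bsub>G\<^esub> c1) \<otimes>\<^bsub>G\<^esub> (\<gamma> z1 \<otimes>\<^bsub>G\<^esub> c1)"
      using z by (simp add: \<gamma>_equivariant G.m_assoc)
    then have "c2 \<otimes>\<^bsub>G\<^esub> \<gamma> (act (inv\<^bsub>G\<^esub> c1) z1) = \<gamma> z1 \<otimes>\<^bsub>G\<^esub> c1 \<longleftrightarrow> c1 = c2"
      using z by (auto simp: G.r_cancel_one G.inv_solve_right')
    then show ?thesis
      using True z
      by (simp add: P bmul2_R_of_right R_mult_comul swap_tens_def lin_ext_D_comul)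
  qed (auto simp: P bmul2_D_mult swap_tens_def lin_ext_D_comul mem_D_basis)
qed

lemma D_R_invertible:
  "bmul2 B (D_mult G act) (R_of \<gamma>) (R_of (\<lambda>h. inv\<^bsub>G\<^esub> \<gamma> h)) = tens (D_unit G H) (D_unit G H :: _ \<Rightarrow> 'k::field)"
  "bmul2 B (D_mult G act) (R_of (\<lambda>h. inv\<^bsub>G\<^esub> \<gamma> h)) (R_of \<gamma>) = tens (D_unit G H) (D_unit G H :: _ \<Rightarrow> 'k::field)"
  by (simp_all add: R_of_mult_R_of)

lemma D_hexagon_left:
  "lin_ext (B \<times> B) (comul_left (D_comul H)) (D_R G H \<gamma>) =
   bmul3 B (D_mult G act) (\<lambda>(x, y, z). D_R G H \<gamma> (x, z) * D_unit G H y)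
     (\<lambda>(x, y, z). D_unit G H x * (D_R G H \<gamma> (y, z) :: 'k::field))"
proof
  fix P :: "('h \<times> 'g) \<times> ('h \<times> 'g) \<times> ('h \<times> 'g)"
  obtain h a k b l c where P: "P = ((h, a), (k, b), (l, c))"
    by (metis prod.collapse)
  show "lin_ext (B \<times> B) (comul_left (D_comul H)) (D_R G H \<gamma>) P =
      bmul3 B (D_mult G act) (\<lambda>(x, y, z). D_R G H \<gamma> (x, z) * D_unit G H y)
        (\<lambda>(x, y, z). D_unit G H x * (D_R G H \<gamma> (y, z) :: 'k)) P"
    unfolding P D_R_eq_R_of lin_ext_comul_left_D_comul
    by (simp add: bmul3_R13_left) (auto simp: D_unit_apply mem_D_basis ldiv_def G.inv_solve_left')
qed

lemma D_hexagon_right: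
  "lin_ext (B \<times> B) (comul_right (D_comul H)) (D_R G H \<gamma>) =
   bmul3 B (D_mult G act) (\<lambda>(x, y, z). D_R G H \<gamma> (x, z) * D_unit G H y)
     (\<lambda>(x, y, z). D_R G H \<gamma> (x, y) * (D_unit G H z :: 'k::field))"
proof
  fix P :: "('h \<times> 'g) \<times> ('h \<times> 'g) \<times> ('h \<times> 'g)"
  obtain l c h a k b where P: "P = ((l, c), (h, a), (k, b))"
    by (metis prod.collapse)
  show "lin_ext (B \<times> B) (comul_right (D_comul H)) (D_R G H \<gamma>) P =
      bmul3 B (D_mult G act) (\<lambda>(x, y, z). D_R G H \<gamma> (x, z) * D_unit G H y)
        (\<lambda>(x, y, z). D_R G H \<gamma> (x, y) * (D_unit G H z :: 'k)) P"
    unfolding P D_R_eq_R_of lin_ext_comul_right_D_comul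
    by (simp add: bmul3_R13_left) (auto simp: D_unit_apply mem_D_basis ldiv_def G.inv_solve_left')
qed

theorem D_braided_bialgebra:
  "braided_bialgebra B (D_mult G act :: _ \<Rightarrow> _ \<Rightarrow> _ \<Rightarrow> 'k::field)
     (D_unit G H) (D_comul H) (D_counit H) (D_R G H \<gamma>)"
  unfolding braided_bialgebra_def
  using D_hexagon_left D_hexagon_right
  unfolding D_R_eq_R_of
  by (intro conjI bexI[of _ "R_of (\<lambda>h. inv\<^bsub>G\<^esub> \<gamma> h)"] ballI D_bialgebra R_of_in_vspace
      D_R_invertible D_R_conj_comul) simp_all

end

theorem mainTheorem3:
  fixes G :: "'g monoid" and H :: "'h monoid"
    and act :: "'g \<Rightarrow> 'h \<Rightarrow> 'h" and \<gamma> :: "'h \<Rightarrow> 'g"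
  assumes "crossed_module G H act \<gamma>"
    and "finite (carrier G)" and "finite (carrier H)"
  shows "braided_bialgebra (D_basis G H) (D_mult G act :: _ \<Rightarrow> _ \<Rightarrow> _ \<Rightarrow> 'k::field)
           (D_unit G H) (D_comul H) (D_counit H) (D_R G H \<gamma>)"
proof -
  interpret finite_crossed_module G H act \<gamma>
    using assms by (rule finite_crossed_moduleI)
  show ?thesis
    by (rule D_braided_bialgebra)
qed

end
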